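(* Let $f:[0,1]\to\mathbb{R}$ be continuous with $f(0),f(1)\in\mathbb{Z}$, and let $n$ be a positive integer. Then $$d_\infty(f,\mathscr{B}_n)\le \frac{5}{4}\,\omega_f(n^{-1/2})+\rho(f,n),$$ where $$\rho(f,n):=\min_{t\in[0,n/2]\cap\mathbb{Z}}\left\{\max\left(\omega_f\Big(\frac{t}{n}\Big),\ \frac{1}{2(n+1-2t)}\right)+\frac{1}{\sqrt{2(t+1)}}\right\},$$ and moreover $$\rho(f,n)\le \omega_f\Big(\frac{1}{2}n^{-1/3}\Big)+2n^{-1/3}.$$ In particular, $$d_\infty(f,\mathscr{B}_n)\le \frac{9}{4}\,\omega_f(n^{-1/3})+2n^{-1/3}.$$
   Context: All functions are real-valued on $[0,1]$. For $k=0,\dots,n$, let $p_{n,k}(x):=\binom{n}{k}x^k(1-x)^{n-k}$. The Bernstein lattice $\mathscr{B}_n$ is the set of polynomials $\sum_{k=0}^n q_k p_{n,k}$ with $q_0,\dots,q_n\in\mathbb{Z}$ (the lattice generated by $p_{n,0},\dots,p_{n,n}$). For $g,h$ continuous on $[0,1]$, $d_\infty(g,h):=\sup_{x\in[0,1]}|g(x)-h(x)|$, and for a set $S$ of functions, $d_\infty(f,S):=\inf_{P\in S}d_\infty(f,P)$. The modulus of continuity of $f$ on $[0,1]$ is $\omega_f(\delta):=\sup\{|f(x)-f(y)|: x,y\in[0,1],\ |x-y|\le\delta\}$. *)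

theory Defs
  imports "HOL-Analysis.Analysis"
begin

definition bern :: "nat \<Rightarrow> nat \<Rightarrow> real \<Rightarrow> real" where
  "bern n k x = real (n choose k) * x ^ k * (1 - x) ^ (n - k)"

definition bernstein_lattice :: "nat \<Rightarrow> (real \<Rightarrow> real) set" where
  "bernstein_lattice n =
     {P. \<exists>q :: nat \<Rightarrow> int. P = (\<lambda>x. \<Sum>k\<le>n. real_of_int (q k) * bern n k x)}"

definition dinf :: "(real \<Rightarrow> real) \<Rightarrow> (real \<Rightarrow> real) \<Rightarrow> real" where
  "dinf g h = (SUP x\<in>{0..1}. \<bar>g x - h x\<bar>)"

definition dinf_set :: "(real \<Rightarrow> real) \<Rightarrow> (real \<Rightarrow> real) set \<Rightarrow> real" where
  "dinf_set f S = (INF P\<in>S. dinf f P)"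

definition modcont :: "(real \<Rightarrow> real) \<Rightarrow> real \<Rightarrow> real" where
  "modcont f \<delta> = (SUP xy\<in>{(x, y). x \<in> {0..1} \<and> y \<in> {0..1} \<and> \<bar>x - y\<bar> \<le> \<delta>}.
                      \<bar>f (fst xy) - f (snd xy)\<bar>)"

definition rho :: "(real \<Rightarrow> real) \<Rightarrow> nat \<Rightarrow> real" where
  "rho f n = Min ((\<lambda>t::nat. max (modcont f (real t / real n)) (1 / (2 * (real n + 1 - 2 * real t)))
                      + 1 / sqrt (2 * (real t + 1))) ` {0 .. n div 2})"

end

theory Submission
  imports Defs
begin

(* Write f - P, for P = sum q_k p_{n,k}, as (f - B_n f) + sum (f(k/n) - q_k) p_{n,k}.  The Bernstein
   operator error is at most (1 + x(1-x)) w(n^(-1/2)) <= 5/4 w(n^(-1/2)), from the bound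
   |f x - f y| <= w(d) (1 + (x-y)^2/d^2) and the second moment x(1-x)/n.  For the integer part take
   q_k = f(0) for k < t and q_k = f(1) for k > n - t, which costs w(t/n); in between let q_k be the
   increments of the rounded partial sums of the values f(j/n), so that f(k/n) - q_k = D_k - D_(k-1)
   with |D_k| <= 1/2.  Summation by parts against the unimodal sequence k -> p_{n,k}(x) bounds this
   part by max_{t <= k <= n-t} p_{n,k}(x) <= C(2t,t)/4^t <= 1/sqrt(2(t+1)), because the maximum of
   p_{n,k} on [0,1] is attained at k/n and decreases in n.  The resulting bound is at most the t-th
   term of rho(f,n); taking t close to n^(2/3)/2 gives the estimate for rho. *)

section \<open>Modulus of continuity\<close>

lemma modcont_bdd_above:
  fixes f :: "real \<Rightarrow> real"
  assumes "continuous_on {0..1} f"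
  shows "bdd_above ((\<lambda>xy. \<bar>f (fst xy) - f (snd xy)\<bar>) `
           {(x, y). x \<in> {0..1} \<and> y \<in> {0..1} \<and> \<bar>x - y\<bar> \<le> \<delta>})"
proof -
  obtain B where B: "\<And>x. x \<in> {0..1} \<Longrightarrow> \<bar>f x\<bar> \<le> B"
    using compact_imp_bounded[OF compact_continuous_image[OF assms compact_Icc]]
    unfolding bounded_iff by (metis image_eqI real_norm_def)
  have "\<bar>f x - f y\<bar> \<le> 2 * B" if "x \<in> {0..1}" "y \<in> {0..1}" for x y
    using B[OF that(1)] B[OF that(2)] by linarith
  then show ?thesis by (intro bdd_aboveI2[of _ _ "2 * B"]) auto
qed

lemma abs_diff_le_modcont:
  assumes "continuous_on {0..1} f" "x \<in> {0..1}" "y \<in> {0..1}" "\<bar>x - y\<bar> \<le> \<delta>"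
  shows "\<bar>f x - f y\<bar> \<le> modcont f \<delta>"
  unfolding modcont_def
  using cSUP_upper[OF _ modcont_bdd_above[OF assms(1)], of "(x, y)"] assms by auto

lemma modcont_nonneg:
  assumes "continuous_on {0..1} f" "0 \<le> \<delta>"
  shows "0 \<le> modcont f \<delta>"
  using abs_diff_le_modcont[OF assms(1), of 0 0] assms(2) by simp

lemma modcont_mono:
  assumes "continuous_on {0..1} f" "0 \<le> \<delta>" "\<delta> \<le> \<delta>'"
  shows "modcont f \<delta> \<le> modcont f \<delta>'"
  unfolding modcont_def
  by (rule cSUP_subset_mono) (use assms modcont_bdd_above[OF assms(1)] in \<open>auto intro!: exI[of _ 0]\<close>)

lemma abs_diff_le_modcont_mult:
  assumes "continuous_on {0..1} f" "x \<in> {0..1}" "y \<in> {0..1}" "\<bar>x - y\<bar> \<le> real N * \<delta>"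
  shows "\<bar>f x - f y\<bar> \<le> real N * modcont f \<delta>"
  using assms(2-4)
proof (induction N arbitrary: x y)
  case 0
  then show ?case by simp
next
  case (Suc N)
  define z where "z = (real N * y + x) / (real N + 1)"
  have "0 \<le> real N * y + x" "real N * y + x \<le> real N + 1"
    using Suc.prems(1,2) mult_left_le[of y "real N"] by auto
  then have "z \<in> {0..1}" unfolding z_def by (auto simp: divide_le_eq_1)
  have "z - y = (x - y) / (real N + 1)" unfolding z_def by (simp add: field_simps)
  then have zy: "\<bar>z - y\<bar> \<le> \<delta>"
    using Suc.prems(3) by (simp add: abs_divide divide_le_eq algebra_simps)
  have "x - z = real N * (z - y)" unfolding z_def by (simp add: field_simps)
  then have "\<bar>x - z\<bar> \<le> real N * \<delta>" using zy by (simp add: abs_mult mult_left_mono)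
  then have "\<bar>f x - f z\<bar> \<le> real N * modcont f \<delta>"
    by (rule Suc.IH[OF Suc.prems(1) \<open>z \<in> {0..1}\<close>])
  moreover have "\<bar>f z - f y\<bar> \<le> modcont f \<delta>"
    using abs_diff_le_modcont[OF assms(1) \<open>z \<in> {0..1}\<close> Suc.prems(2) zy] .
  ultimately show ?case by (simp add: algebra_simps)
qed

lemma abs_diff_le_modcont_quadratic:
  assumes "continuous_on {0..1} f" "0 < \<delta>" "x \<in> {0..1}" "y \<in> {0..1}"
  shows "\<bar>f x - f y\<bar> \<le> modcont f \<delta> * (1 + (x - y)^2 / \<delta>^2)"
proof -
  define u where "u = \<bar>x - y\<bar> / \<delta>"
  have "0 \<le> u" and u2: "(x - y)^2 / \<delta>^2 = u^2"
    using assms(2) by (simp_all add: u_def power_divide)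
  have \<omega>: "0 \<le> modcont f \<delta>" using modcont_nonneg[OF assms(1)] assms(2) by simp
  show ?thesis
  proof (cases "u \<le> 1")
    case True
    then have "\<bar>f x - f y\<bar> \<le> modcont f \<delta>"
      using assms by (intro abs_diff_le_modcont) (auto simp: u_def divide_le_eq)
    moreover have "0 \<le> modcont f \<delta> * u^2" using \<omega> by simp
    ultimately show ?thesis unfolding u2 distrib_left by linarith
  next
    case False
    have "\<bar>x - y\<bar> = u * \<delta>" using assms(2) by (simp add: u_def)
    also have "\<dots> \<le> real (nat \<lceil>u\<rceil>) * \<delta>"
      using assms(2) by (intro mult_right_mono) linarith+
    finally have "\<bar>f x - f y\<bar> \<le> real (nat \<lceil>u\<rceil>) * modcont f \<delta>"
      using assms by (intro abs_diff_le_modcont_mult) auto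
    also have "\<dots> \<le> (1 + u^2) * modcont f \<delta>"
    proof (rule mult_right_mono[OF _ \<omega>])
      have "u \<le> u^2" using False by (simp add: power2_eq_square)
      then show "real (nat \<lceil>u\<rceil>) \<le> 1 + u^2" using \<open>0 \<le> u\<close> by linarith
    qed
    finally show ?thesis by (simp add: u2 mult.commute)
  qed
qed

lemma abs_diff_grid_le_modcont:
  assumes "continuous_on {0..1} f" "j \<le> n" "k \<le> n" "k \<le> j + t" "j \<le> k + t"
  shows "\<bar>f (real k / real n) - f (real j / real n)\<bar> \<le> modcont f (real t / real n)"
proof (rule abs_diff_le_modcont[OF assms(1)])
  show "real k / real n \<in> {0..1}" "real j / real n \<in> {0..1}"
    using assms(2,3) by (auto simp: divide_le_eq_1)
  have "\<bar>real k - real j\<bar> \<le> real t" using assms(4,5) by linarith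
  then show "\<bar>real k / real n - real j / real n\<bar> \<le> real t / real n"
    by (simp add: abs_divide divide_right_mono flip: diff_divide_distrib)
qed

section \<open>The Bernstein operator error\<close>

lemma Bernstein_second_moment:
  assumes "n > 0"
  shows "(\<Sum>k\<le>n. (x - real k / real n)^2 * Bernstein n k x) = x * (1 - x) / real n"
proof -
  have "(\<Sum>k\<le>n. (x - real k / real n)^2 * Bernstein n k x)
     = (\<Sum>k\<le>n. x^2 * Bernstein n k x - 2 * x / real n * (real k * Bernstein n k x)
          + (real k * (real k - 1) * Bernstein n k x + real k * Bernstein n k x) / (real n)^2)"
    using assms by (intro sum.cong) (simp_all add: power2_eq_square field_simps)
  also have "\<dots> = x^2 * (\<Sum>k\<le>n. Bernstein n k x)
       - 2 * x / real n * (\<Sum>k\<le>n. real k * Bernstein n k x)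
       + ((\<Sum>k\<le>n. real k * (real k - 1) * Bernstein n k x) + (\<Sum>k\<le>n. real k * Bernstein n k x))
         / (real n)^2"
    by (simp only: sum.distrib sum_subtractf sum_distrib_left sum_divide_distrib add_divide_distrib)
  also have "\<dots> = x^2 * 1 - 2 * x / real n * (real n * x)
       + (real n * (real n - 1) * x^2 + real n * x) / (real n)^2"
    by (simp only: sum_Bernstein sum_k_Bernstein sum_kk_Bernstein)
  also have "\<dots> = x * (1 - x) / real n"
    using assms by (simp add: power2_eq_square field_simps)
  finally show ?thesis .
qed

lemma Bernstein_approximation_error:
  assumes "continuous_on {0..1} f" "n > 0" "x \<in> {0..1}"
  shows "\<bar>f x - (\<Sum>k\<le>n. f (real k / real n) * Bernstein n k x)\<bar>
           \<le> 5/4 * modcont f (1 / sqrt (real n))"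
proof -
  define \<omega> where "\<omega> = modcont f (1 / sqrt (real n))"
  have "0 \<le> \<omega>" unfolding \<omega>_def using modcont_nonneg[OF assms(1)] by simp
  have p: "0 \<le> Bernstein n k x" for k using assms(3) by (simp add: Bernstein_nonneg)
  have "\<bar>f x - (\<Sum>k\<le>n. f (real k / real n) * Bernstein n k x)\<bar>
      = \<bar>\<Sum>k\<le>n. (f x - f (real k / real n)) * Bernstein n k x\<bar>"
    by (simp add: left_diff_distrib sum_subtractf flip: sum_distrib_left)
  also have "\<dots> \<le> (\<Sum>k\<le>n. \<bar>(f x - f (real k / real n)) * Bernstein n k x\<bar>)"
    by (rule sum_abs)
  also have "\<dots> = (\<Sum>k\<le>n. \<bar>f x - f (real k / real n)\<bar> * Bernstein n k x)"
    using p by (simp add: abs_mult)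
  also have "\<dots> \<le> (\<Sum>k\<le>n. \<omega> * (1 + real n * (x - real k / real n)^2) * Bernstein n k x)"
  proof (intro sum_mono mult_right_mono p)
    fix k assume "k \<in> {..n}"
    then have k: "real k / real n \<in> {0..1}" by (auto simp: divide_le_eq_1)
    show "\<bar>f x - f (real k / real n)\<bar> \<le> \<omega> * (1 + real n * (x - real k / real n)^2)"
      using abs_diff_le_modcont_quadratic[OF assms(1) _ assms(3) k, of "1 / sqrt (real n)"] assms(2)
      by (simp add: \<omega>_def power_divide mult.commute)
  qed
  also have "\<dots> = \<omega> * (\<Sum>k\<le>n. Bernstein n k x)
                   + \<omega> * real n * (\<Sum>k\<le>n. (x - real k / real n)^2 * Bernstein n k x)"
    by (simp add: algebra_simps sum.distrib sum_distrib_left del: sum_Bernstein)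
  also have "\<dots> = \<omega> * (1 + x * (1 - x))"
    using assms(2) by (simp add: Bernstein_second_moment[OF assms(2)] distrib_left)
  also have "\<dots> \<le> \<omega> * (5/4)"
  proof (rule mult_left_mono[OF _ \<open>0 \<le> \<omega>\<close>])
    have "0 \<le> (x - 1/2)^2" by simp
    then show "1 + x * (1 - x) \<le> 5/4" by (simp add: power2_eq_square algebra_simps)
  qed
  finally show ?thesis by (simp add: \<omega>_def mult.commute)
qed

section \<open>The maximum of a Bernstein basis polynomial\<close>

definition Bernstein_max :: "nat \<Rightarrow> nat \<Rightarrow> real" where
  "Bernstein_max n k = Bernstein n k (real k / real n)"

lemma power_mult_power_le_one:
  fixes u v :: real
  assumes "0 < u" "0 < v" "real k * u + real m * v = real k + real m"
  shows "u ^ k * v ^ m \<le> 1"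
proof -
  have "ln (u ^ k * v ^ m) = real k * ln u + real m * ln v"
    using assms by (simp add: ln_mult ln_realpow)
  also have "\<dots> \<le> real k * (u - 1) + real m * (v - 1)"
    using assms by (intro add_mono mult_left_mono ln_le_minus_one) auto
  also have "\<dots> = 0" using assms(3) by (simp add: algebra_simps)
  finally show ?thesis using assms by (simp add: ln_le_zero_iff)
qed

lemma power_mult_power_le_at_ratio:
  assumes "k \<le> n" "0 \<le> x" "x \<le> 1"
  shows "x ^ k * (1 - x) ^ (n - k) \<le> (real k / real n) ^ k * (1 - real k / real n) ^ (n - k)"
proof -
  consider "k = 0" | "k = n" | "0 < k" "k < n" using assms(1) by linarith
  then show ?thesis
  proof cases
    case 1
    then show ?thesis using assms by (simp add: power_le_one)
  next
    case 2
    then show ?thesis using assms by (cases "n = 0") (simp_all add: power_le_one)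
  next
    case 3
    define a where "a = real k / real n"
    have a: "0 < a" "a < 1" using 3 by (simp_all add: a_def)
    show ?thesis
    proof (cases "0 < x \<and> x < 1")
      case False
      then have "x = 0 \<or> x = 1" using assms by auto
      moreover have "0 \<le> a ^ k * (1 - a) ^ (n - k)" using a by simp
      ultimately show ?thesis using 3 by (auto simp: a_def zero_power)
    next
      case True
      define u where "u = x / a"
      define v where "v = (1 - x) / (1 - a)"
      have "u ^ k * v ^ (n - k) \<le> 1"
        using True a 3 unfolding u_def v_def a_def
        by (intro power_mult_power_le_one) (simp_all add: of_nat_diff field_simps)
      moreover have "x ^ k * (1 - x) ^ (n - k) = a ^ k * (1 - a) ^ (n - k) * (u ^ k * v ^ (n - k))"
        using a by (simp add: u_def v_def power_divide)
      ultimately show ?thesis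
        using a unfolding a_def[symmetric] by (simp add: mult_left_le)
    qed
  qed
qed

lemma Bernstein_le_Bernstein_max:
  assumes "k \<le> n" "0 \<le> x" "x \<le> 1"
  shows "Bernstein n k x \<le> Bernstein_max n k"
  unfolding Bernstein_max_def Bernstein_def mult.assoc
  using assms by (intro mult_left_mono power_mult_power_le_at_ratio) auto

lemma Bernstein_max_eq:
  assumes "0 < n" "k \<le> n"
  shows "Bernstein_max n k = real (n choose k) * real k ^ k * real (n - k) ^ (n - k) / real n ^ n"
proof -
  have "1 - real k / real n = real (n - k) / real n" using assms by (simp add: of_nat_diff field_simps)
  moreover have "real n ^ k * real n ^ (n - k) = real n ^ n" using assms by (simp flip: power_add)
  ultimately show ?thesis
    unfolding Bernstein_max_def Bernstein_def by (simp add: power_divide)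
qed

lemma one_plus_inverse_power_le_Suc:
  assumes "0 < m"
  shows "(1 + 1 / real m) ^ m \<le> (1 + 1 / real (Suc m)) ^ Suc m"
proof -
  define t where "t = real (Suc m)"
  have t: "1 < t" "real m = t - 1" using assms by (simp_all add: t_def)
  define r where "r = 1 - 1 / t^2"
  have step: "1 + 1 / t = (1 + 1 / real m) * r"
    unfolding r_def t(2) using t(1) by (simp add: field_simps power2_eq_square)
  have "1 \<le> 1 + 1 / t^3" using t by simp
  also have "\<dots> = (1 - real m / t^2) * (1 + 1 / t)"
    unfolding t(2) using t(1) by (simp add: field_simps power2_eq_square power3_eq_cube)
  also have "\<dots> \<le> r ^ m * (1 + 1 / t)"
  proof (rule mult_right_mono)
    have "1 / t^2 \<le> 1" using t by simp
    then show "1 - real m / t^2 \<le> r ^ m"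
      using Bernoulli_inequality[of "- 1 / t^2" m] by (simp add: r_def)
  qed (use t in simp)
  finally have r: "1 \<le> r ^ m * (1 + 1 / t)" .
  have "(1 + 1 / real m) ^ m = (1 + 1 / real m) ^ m * 1" by simp
  also have "\<dots> \<le> (1 + 1 / real m) ^ m * (r ^ m * (1 + 1 / t))"
    by (rule mult_left_mono[OF r]) simp
  also have "\<dots> = (1 + 1 / t) ^ Suc m"
    unfolding power_Suc2 step power_mult_distrib by (simp add: algebra_simps)
  finally show ?thesis by (simp add: t_def)
qed

lemma one_plus_inverse_power_mono:
  assumes "0 < m" "m \<le> n"
  shows "(1 + 1 / real m) ^ m \<le> (1 + 1 / real n) ^ n"
  using assms(2)
proof (induction n rule: dec_induct)
  case (step j)
  then show ?case using one_plus_inverse_power_le_Suc[of j] assms(1) by linarith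
qed simp

lemma Bernstein_max_Suc_le:
  assumes "0 < k" "k < n"
  shows "Bernstein_max (Suc n) k \<le> Bernstein_max n k"
proof -
  define m where "m = n - k"
  define E where "E j = (1 + 1 / real j) ^ j" for j
  have m: "0 < m" "m \<le> n" "Suc n - k = Suc m" using assms by (auto simp: m_def)
  then have "0 < n" by simp
  have E: "real (Suc j) ^ j = E j * real j ^ j" if "0 < j" for j
  proof -
    have "real (Suc j) = (1 + 1 / real j) * real j" using that by (simp add: field_simps)
    then show ?thesis unfolding E_def by (metis power_mult_distrib)
  qed
  have E_pos: "0 < E j" for j unfolding E_def by (intro zero_less_power add_pos_nonneg) auto
  have "Suc m * (Suc n choose k) = Suc n * (n choose k)"
    using binomial_absorb_comp[of "Suc n" k] m(3) by simp
  then have binom: "real (Suc n choose k) * real (Suc m) = real (Suc n) * real (n choose k)"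
    by (metis of_nat_mult mult.commute)
  have "Bernstein_max (Suc n) k
      = real (Suc n choose k) * real k ^ k * real (Suc m) ^ Suc m / real (Suc n) ^ Suc n"
    using Bernstein_max_eq[of "Suc n" k] assms unfolding m(3) by simp
  also have "\<dots> = (real (Suc n choose k) * real (Suc m)) * real k ^ k * real (Suc m) ^ m
                   / (real (Suc n) * real (Suc n) ^ n)"
    by (simp only: power_Suc mult_ac)
  also have "\<dots> = real (n choose k) * real k ^ k * real (Suc m) ^ m / real (Suc n) ^ n"
    unfolding binom by (simp del: of_nat_Suc)
  also have "\<dots> = (real (n choose k) * real k ^ k * real m ^ m / real n ^ n) * (E m / E n)"
    unfolding E[OF m(1)] E[OF \<open>0 < n\<close>] by (simp only: mult_ac times_divide_eq_right divide_divide_eq_left)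
  also have "\<dots> = Bernstein_max n k * (E m / E n)"
    using assms by (simp add: Bernstein_max_eq m_def)
  also have "\<dots> \<le> Bernstein_max n k"
  proof (rule mult_left_le)
    show "E m / E n \<le> 1"
      using one_plus_inverse_power_mono[OF m(1,2)] E_pos[of n] by (simp add: E_def)
    show "0 \<le> Bernstein_max n k"
      unfolding Bernstein_max_def using assms by (intro Bernstein_nonneg) (auto simp: divide_le_eq_1)
  qed
  finally show ?thesis .
qed

lemma Bernstein_max_le_central:
  assumes "0 < k" "2 * k \<le> n"
  shows "Bernstein_max n k \<le> Bernstein_max (2 * k) k"
  using assms(2)
proof (induction n rule: dec_induct)
  case (step j)
  then show ?case using Bernstein_max_Suc_le[of k j] assms(1) by linarith
qed simp

lemma Bernstein_max_central: "Bernstein_max (2 * k) k = real ((2 * k) choose k) / 4 ^ k"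
proof (cases "k = 0")
  case False
  then have "real k / real (2 * k) = 1 / 2" by simp
  then show ?thesis
    by (simp add: Bernstein_max_def Bernstein_def power_divide power_mult flip: power_add mult_2)
qed (simp add: Bernstein_max_def Bernstein_def)

lemma central_binomial_Suc:
  "(real k + 1) * real ((2 * Suc k) choose Suc k) = 2 * (2 * real k + 1) * real ((2 * k) choose k)"
proof -
  have "Suc k * ((2 * Suc k) choose Suc k) = Suc k * (2 * (Suc (2 * k) choose k))"
    using Suc_times_binomial[of k "Suc (2 * k)"] by (simp del: binomial_Suc_Suc)
  then have "(2 * Suc k) choose Suc k = 2 * (Suc (2 * k) choose k)"
    using mult_left_cancel[OF Suc_not_Zero] by blast
  moreover have "Suc k * (Suc (2 * k) choose k) = Suc (2 * k) * ((2 * k) choose k)"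
    using Suc_times_binomial_add[of k k] Suc_times_binomial[of k "2 * k"]
    by (simp del: binomial_Suc_Suc add: mult_2)
  ultimately have "Suc k * ((2 * Suc k) choose Suc k) = 2 * (Suc (2 * k) * ((2 * k) choose k))"
    by (metis mult.left_commute)
  then show ?thesis
    by (metis of_nat_Suc of_nat_mult of_nat_numeral add.commute mult.assoc)
qed

lemma central_binomial_sq_le: "(real ((2 * k) choose k) / 4 ^ k)^2 * (3 * real k + 1) \<le> 1"
proof (induction k)
  case (Suc k)
  define c where "c = real ((2 * k) choose k) / 4 ^ k"
  define c' where "c' = real ((2 * Suc k) choose Suc k) / 4 ^ Suc k"
  have "c' * (2 * real k + 2) = ((real k + 1) * real ((2 * Suc k) choose Suc k)) / (2 * 4 ^ k)"
    unfolding c'_def by (simp add: field_simps del: binomial_Suc_Suc)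
  also have "\<dots> = c * (2 * real k + 1)"
    unfolding central_binomial_Suc c_def by (simp add: field_simps)
  finally have rec: "c' * (2 * real k + 2) = c * (2 * real k + 1)" .
  have "(c' * (2 * real k + 2))^2 * (3 * real k + 4) = c^2 * ((2 * real k + 1)^2 * (3 * real k + 4))"
    unfolding rec by (simp add: power_mult_distrib)
  also have "\<dots> \<le> c^2 * ((3 * real k + 1) * (2 * real k + 2)^2)"
    by (intro mult_left_mono) (simp_all add: power2_eq_square algebra_simps)
  also have "\<dots> \<le> 1 * (2 * real k + 2)^2"
    using Suc.IH unfolding c_def mult.assoc[symmetric] by (intro mult_right_mono) simp_all
  finally have "c'^2 * (3 * real k + 4) * (2 * real k + 2)^2 \<le> 1 * (2 * real k + 2)^2"
    by (simp only: power_mult_distrib mult_ac)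
  then have "c'^2 * (3 * real k + 4) \<le> 1" by (rule mult_right_le_imp_le) simp
  then show ?case unfolding c'_def by (simp add: algebra_simps del: binomial_Suc_Suc)
qed simp

lemma Bernstein_le_inv_sqrt_lower_half:
  assumes "0 < k" "2 * k \<le> n" "0 \<le> x" "x \<le> 1"
  shows "Bernstein n k x \<le> 1 / sqrt (2 * (real k + 1))"
proof -
  define c where "c = real ((2 * k) choose k) / 4 ^ k"
  have "Bernstein n k x \<le> Bernstein_max n k"
    using assms by (intro Bernstein_le_Bernstein_max) auto
  also have "\<dots> \<le> c"
    using Bernstein_max_le_central[OF assms(1,2)] by (simp add: Bernstein_max_central c_def)
  also have "c \<le> 1 / sqrt (2 * (real k + 1))"
  proof -
    have "c^2 * (2 * (real k + 1)) \<le> c^2 * (3 * real k + 1)"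
      using assms(1) by (intro mult_left_mono) auto
    also have "\<dots> \<le> 1" unfolding c_def by (rule central_binomial_sq_le)
    finally have "c \<le> sqrt (1 / (2 * (real k + 1)))"
      by (intro real_le_rsqrt) (simp add: le_divide_eq)
    then show ?thesis by (simp add: real_sqrt_divide)
  qed
  finally show ?thesis .
qed

lemma Bernstein_le_inv_sqrt:
  assumes "0 < k" "k < n" "0 \<le> x" "x \<le> 1"
  shows "Bernstein n k x \<le> 1 / sqrt (2 * (real (min k (n - k)) + 1))"
proof (cases "2 * k \<le> n")
  case True
  then show ?thesis using Bernstein_le_inv_sqrt_lower_half[OF assms(1) True assms(3,4)] by simp
next
  case False
  have "Bernstein n k x = Bernstein n (n - k) (1 - x)"
    using assms(2) by (simp add: Bernstein_def binomial_symmetric[of k n] algebra_simps)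
  also have "\<dots> \<le> 1 / sqrt (2 * (real (n - k) + 1))"
    using assms False by (intro Bernstein_le_inv_sqrt_lower_half) auto
  finally show ?thesis using False by simp
qed

section \<open>Summation by parts against the Bernstein basis\<close>

lemma Bernstein_Suc_ratio:
  assumes "k < n"
  shows "real (Suc k) * (1 - x) * Bernstein n (Suc k) x = real (n - k) * x * Bernstein n k x"
proof -
  have "Suc k * (n choose Suc k) = (n - k) * (n choose k)"
    using binomial_absorption[of k n] binomial_absorb_comp[of n k] by simp
  then have binom: "real (Suc k) * real (n choose Suc k) = real (n - k) * real (n choose k)"
    by (metis of_nat_mult)
  have pow: "(1 - x) ^ (n - Suc k) * (1 - x) = (1 - x) ^ (n - k)"
    using assms by (simp flip: power_Suc2 add: Suc_diff_Suc)
  have "real (Suc k) * (1 - x) * Bernstein n (Suc k) x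
      = (real (Suc k) * real (n choose Suc k)) * x ^ Suc k * ((1 - x) ^ (n - Suc k) * (1 - x))"
    unfolding Bernstein_def by (simp only: mult_ac)
  also have "\<dots> = (real (n - k) * real (n choose k)) * x ^ Suc k * (1 - x) ^ (n - k)"
    unfolding binom pow ..
  also have "\<dots> = real (n - k) * x * Bernstein n k x"
    unfolding Bernstein_def by (simp only: power_Suc mult_ac)
  finally show ?thesis .
qed

lemma Bernstein_Suc_diff:
  assumes "k < n"
  shows "real (Suc k) * (1 - x) * (Bernstein n (Suc k) x - Bernstein n k x)
           = ((real n + 1) * x - real (Suc k)) * Bernstein n k x"
  using Bernstein_Suc_ratio[OF assms, of x] assms by (simp add: of_nat_diff algebra_simps)

lemma Bernstein_le_Bernstein_Suc:
  assumes "k < n" "0 \<le> x" "x < 1" "real (Suc k) \<le> (real n + 1) * x"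
  shows "Bernstein n k x \<le> Bernstein n (Suc k) x"
proof -
  have "0 \<le> ((real n + 1) * x - real (Suc k)) * Bernstein n k x"
    using assms by (simp add: Bernstein_nonneg)
  then have "0 \<le> real (Suc k) * (1 - x) * (Bernstein n (Suc k) x - Bernstein n k x)"
    unfolding Bernstein_Suc_diff[OF assms(1)] .
  moreover have "0 < real (Suc k) * (1 - x)" using assms(3) by simp
  ultimately show ?thesis by (simp add: zero_le_mult_iff)
qed

lemma Bernstein_Suc_le_Bernstein:
  assumes "k < n" "0 \<le> x" "x < 1" "(real n + 1) * x \<le> real (Suc k)"
  shows "Bernstein n (Suc k) x \<le> Bernstein n k x"
proof -
  have "((real n + 1) * x - real (Suc k)) * Bernstein n k x \<le> 0"
    using assms by (simp add: Bernstein_nonneg mult_nonpos_nonneg)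
  then have "real (Suc k) * (1 - x) * (Bernstein n (Suc k) x - Bernstein n k x) \<le> 0"
    unfolding Bernstein_Suc_diff[OF assms(1)] .
  moreover have "0 < real (Suc k) * (1 - x)" using assms(3) by simp
  ultimately show ?thesis using assms(3) by (auto simp: mult_le_0_iff)
qed

lemma sum_diff_mult_by_parts:
  fixes D p :: "nat \<Rightarrow> 'a::comm_ring"
  assumes "0 < a" "a \<le> b"
  shows "(\<Sum>k=a..b. (D k - D (k - 1)) * p k)
           = D b * p b - D (a - 1) * p a + (\<Sum>k=a..<b. D k * (p k - p (Suc k)))"
  using assms(2)
proof (induction b rule: dec_induct)
  case (step j)
  then show ?case by (simp add: sum.cl_ivl_Suc algebra_simps)
qed (simp add: algebra_simps)

lemma sum_abs_diff_unimodal: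
  fixes p :: "nat \<Rightarrow> real"
  assumes "a \<le> m" "m \<le> b"
    and "\<And>k. a \<le> k \<Longrightarrow> k < m \<Longrightarrow> p k \<le> p (Suc k)"
    and "\<And>k. m \<le> k \<Longrightarrow> k < b \<Longrightarrow> p (Suc k) \<le> p k"
  shows "(\<Sum>k=a..<b. \<bar>p k - p (Suc k)\<bar>) = (p m - p a) + (p m - p b)"
proof -
  have "(\<Sum>k=a..<b. \<bar>p k - p (Suc k)\<bar>)
      = (\<Sum>k=a..<m. \<bar>p k - p (Suc k)\<bar>) + (\<Sum>k=m..<b. \<bar>p k - p (Suc k)\<bar>)"
    using assms(1,2) by (simp add: sum.atLeastLessThan_concat)
  also have "(\<Sum>k=a..<m. \<bar>p k - p (Suc k)\<bar>) = (\<Sum>k=a..<m. p (Suc k) - p k)"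
    using assms(3) by (intro sum.cong) auto
  also have "(\<Sum>k=m..<b. \<bar>p k - p (Suc k)\<bar>) = - (\<Sum>k=m..<b. p (Suc k) - p k)"
    unfolding sum_negf[symmetric] using assms(4) by (intro sum.cong) auto
  also have "(\<Sum>k=a..<m. p (Suc k) - p k) + - (\<Sum>k=m..<b. p (Suc k) - p k)
      = (p m - p a) + (p m - p b)"
    using assms(1,2) by (simp add: sum_Suc_diff')
  finally show ?thesis .
qed

lemma abs_sum_by_parts_le_peak:
  fixes D p :: "nat \<Rightarrow> real"
  assumes "0 < a" "a \<le> m" "m \<le> b" "D (a - 1) = 0"
    and D: "\<And>k. a \<le> k \<Longrightarrow> k \<le> b \<Longrightarrow> \<bar>D k\<bar> \<le> 1/2"
    and p: "\<And>k. 0 \<le> p k"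
    and inc: "\<And>k. a \<le> k \<Longrightarrow> k < m \<Longrightarrow> p k \<le> p (Suc k)"
    and dec: "\<And>k. m \<le> k \<Longrightarrow> k < b \<Longrightarrow> p (Suc k) \<le> p k"
  shows "\<bar>\<Sum>k=a..b. (D k - D (k - 1)) * p k\<bar> \<le> p m"
proof -
  have "\<bar>\<Sum>k=a..b. (D k - D (k - 1)) * p k\<bar>
      = \<bar>D b * p b + (\<Sum>k=a..<b. D k * (p k - p (Suc k)))\<bar>"
    using sum_diff_mult_by_parts[OF assms(1) order_trans[OF assms(2,3)], of D p] assms(4) by simp
  also have "\<dots> \<le> \<bar>D b * p b\<bar> + (\<Sum>k=a..<b. \<bar>D k * (p k - p (Suc k))\<bar>)"
    by (intro order_trans[OF abs_triangle_ineq] add_left_mono sum_abs)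
  also have "\<dots> = \<bar>D b\<bar> * p b + (\<Sum>k=a..<b. \<bar>D k\<bar> * \<bar>p k - p (Suc k)\<bar>)"
    using p[of b] by (simp add: abs_mult)
  also have "\<dots> \<le> 1/2 * p b + (\<Sum>k=a..<b. 1/2 * \<bar>p k - p (Suc k)\<bar>)"
    using D p[of b] assms(2,3) by (intro add_mono sum_mono mult_right_mono) auto
  also have "\<dots> = 1/2 * p b + 1/2 * ((p m - p a) + (p m - p b))"
    using sum_abs_diff_unimodal[of a m b p, OF assms(2,3) inc dec] by (simp only: sum_distrib_left[symmetric])
  also have "\<dots> \<le> p m" using p[of a] by (simp add: field_simps)
  finally show ?thesis .
qed

lemma abs_sum_Bernstein_by_parts_le:
  fixes D :: "nat \<Rightarrow> real"
  assumes "0 < a" "a \<le> b" "a + b = n" "D (a - 1) = 0"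
    and D: "\<And>k. a \<le> k \<Longrightarrow> k \<le> b \<Longrightarrow> \<bar>D k\<bar> \<le> 1/2"
    and x: "0 \<le> x" "x \<le> 1"
  shows "\<bar>\<Sum>k=a..b. (D k - D (k - 1)) * Bernstein n k x\<bar> \<le> 1 / sqrt (2 * (real a + 1))"
proof (cases "x = 1")
  case True
  have "(\<Sum>k=a..b. (D k - D (k - 1)) * Bernstein n k x) = 0"
    using True assms(1,3) by (intro sum.neutral) (auto simp: Bernstein_def)
  then show ?thesis by simp
next
  case False
  define c where "c = (real n + 1) * x"
  \<comment> \<open>a mode of \<open>k \<mapsto> Bernstein n k x\<close>, clamped to \<open>[a, b]\<close>\<close>
  define m where "m = max a (min b (nat \<lceil>c\<rceil> - 1))"
  have m: "a \<le> m" "m \<le> b" using assms(2) by (auto simp: m_def)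
  have "\<bar>\<Sum>k=a..b. (D k - D (k - 1)) * Bernstein n k x\<bar> \<le> Bernstein n m x"
  proof (rule abs_sum_by_parts_le_peak[of a m b D "\<lambda>k. Bernstein n k x", OF assms(1) m assms(4) D])
    show "0 \<le> Bernstein n k x" for k using x by (rule Bernstein_nonneg)
    show "Bernstein n k x \<le> Bernstein n (Suc k) x" if "a \<le> k" "k < m" for k
      using that m assms(3) x False
      by (intro Bernstein_le_Bernstein_Suc) (auto simp: m_def c_def, linarith+)
    show "Bernstein n (Suc k) x \<le> Bernstein n k x" if "m \<le> k" "k < b" for k
      using that m assms(3) x False
      by (intro Bernstein_Suc_le_Bernstein) (auto simp: m_def c_def, linarith+)
  qed
  also have "\<dots> \<le> 1 / sqrt (2 * (real (min m (n - m)) + 1))"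
    using m assms x by (intro Bernstein_le_inv_sqrt) auto
  also have "\<dots> \<le> 1 / sqrt (2 * (real a + 1))"
    using m assms(3) by (intro divide_left_mono real_sqrt_le_mono mult_left_mono) auto
  finally show ?thesis .
qed

section \<open>Integer coefficients by rounding partial sums\<close>

lemma rounding_partial_sums:
  fixes g :: "nat \<Rightarrow> real"
  assumes "0 < a"
  obtains D :: "nat \<Rightarrow> real" and r :: "nat \<Rightarrow> int"
  where "D (a - 1) = 0" "\<And>k. \<bar>D k\<bar> \<le> 1/2"
    and "\<And>k. a \<le> k \<Longrightarrow> g k - of_int (r k) = D k - D (k - 1)"
proof -
  \<comment> \<open>rounding the partial sums instead of the terms makes the rounding errors telescope\<close>
  define S where "S k = (\<Sum>j=a..k. g j)" for k
  define D where "D k = S k - of_int (round (S k))" for k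
  show ?thesis
  proof (rule that[of D "\<lambda>k. round (S k) - round (S (k - 1))"])
    show "D (a - 1) = 0" using assms by (simp add: D_def S_def)
    show "\<bar>D k\<bar> \<le> 1/2" for k
      unfolding D_def using of_int_round_abs_le[of "S k"] by linarith
    show "g k - of_int (round (S k) - round (S (k - 1))) = D k - D (k - 1)" if "a \<le> k" for k
    proof -
      have "S k = S (k - 1) + g k"
        using that assms unfolding S_def by (cases k) (auto simp: sum.cl_ivl_Suc)
      then show ?thesis by (simp add: D_def)
    qed
  qed
qed

lemma Bernstein_rounding_middle:
  fixes g :: "nat \<Rightarrow> real"
  assumes "0 < a" "a + b = n"
  obtains r :: "nat \<Rightarrow> int" where
    "\<And>x. x \<in> {0..1} \<Longrightarrow>
       \<bar>\<Sum>k=a..b. (g k - of_int (r k)) * Bernstein n k x\<bar> \<le> 1 / sqrt (2 * (real a + 1))"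
proof -
  obtain D r where D: "D (a - 1) = 0" "\<And>k. \<bar>D k\<bar> \<le> 1/2"
    and r: "\<And>k. a \<le> k \<Longrightarrow> g k - of_int (r k) = D k - D (k - 1)"
    by (rule rounding_partial_sums[where g = g, OF assms(1)]) auto
  show ?thesis
  proof (rule that[of r])
    fix x :: real assume x: "x \<in> {0..1}"
    show "\<bar>\<Sum>k=a..b. (g k - of_int (r k)) * Bernstein n k x\<bar> \<le> 1 / sqrt (2 * (real a + 1))"
    proof (cases "a \<le> b")
      case True
      have "(\<Sum>k=a..b. (g k - of_int (r k)) * Bernstein n k x)
          = (\<Sum>k=a..b. (D k - D (k - 1)) * Bernstein n k x)"
        using r by (intro sum.cong) auto
      also have "\<bar>\<dots>\<bar> \<le> 1 / sqrt (2 * (real a + 1))"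
        using x D(2) by (intro abs_sum_Bernstein_by_parts_le[of a b n D, OF assms(1) True assms(2) D(1)]) auto
      finally show ?thesis .
    qed simp
  qed
qed

lemma abs_sum_Bernstein_split_le:
  assumes "b \<le> n" "0 \<le> x" "x \<le> 1" "0 \<le> w"
    and outer: "\<And>k. k \<in> {..n} - {a..b} \<Longrightarrow> \<bar>e k\<bar> \<le> w"
    and middle: "\<bar>\<Sum>k=a..b. e k * Bernstein n k x\<bar> \<le> B"
  shows "\<bar>\<Sum>k\<le>n. e k * Bernstein n k x\<bar> \<le> w + B"
proof -
  have p: "0 \<le> Bernstein n k x" for k using assms(2,3) by (rule Bernstein_nonneg)
  have "\<bar>\<Sum>k\<in>{..n} - {a..b}. e k * Bernstein n k x\<bar> \<le> (\<Sum>k\<in>{..n} - {a..b}. w * Bernstein n k x)"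
    using outer p by (intro order_trans[OF sum_abs] sum_mono) (simp add: abs_mult mult_right_mono)
  also have "\<dots> \<le> (\<Sum>k\<le>n. w * Bernstein n k x)"
    using assms(4) p by (intro sum_mono2) auto
  also have "\<dots> = w" by (simp flip: sum_distrib_left)
  finally have "\<bar>\<Sum>k\<in>{..n} - {a..b}. e k * Bernstein n k x\<bar> \<le> w" .
  moreover have "(\<Sum>k\<le>n. e k * Bernstein n k x)
      = (\<Sum>k\<in>{..n} - {a..b}. e k * Bernstein n k x) + (\<Sum>k=a..b. e k * Bernstein n k x)"
    using assms(1) by (intro sum.subset_diff) auto
  ultimately show ?thesis using middle by linarith
qed

lemma Bernstein_rounding_error:
  assumes f: "continuous_on {0..1} f" "f 0 \<in> \<int>" "f 1 \<in> \<int>" and "0 < n" "t \<le> n div 2"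
  obtains q :: "nat \<Rightarrow> int" where
    "\<And>x. x \<in> {0..1} \<Longrightarrow>
       \<bar>\<Sum>k\<le>n. (f (real k / real n) - of_int (q k)) * Bernstein n k x\<bar>
         \<le> modcont f (real t / real n) + 1 / sqrt (2 * (real t + 1))"
proof -
  obtain i0 i1 where i: "f (real 0 / real n) = of_int i0" "f (real n / real n) = of_int i1"
    using f(2,3) assms(4) by (auto elim!: Ints_cases)
  define a where "a = max t 1"
  define b where "b = n - a"
  have a: "0 < a" "t \<le> a" "a \<le> Suc t" and ab: "a + b = n"
    using assms(4,5) by (auto simp: a_def b_def)
  obtain r where r: "\<And>x. x \<in> {0..1} \<Longrightarrow>
      \<bar>\<Sum>k=a..b. (f (real k / real n) - of_int (r k)) * Bernstein n k x\<bar> \<le> 1 / sqrt (2 * (real a + 1))"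
    using Bernstein_rounding_middle[where g = "\<lambda>k. f (real k / real n)", OF a(1) ab] by blast
  define q where "q k = (if k < a then i0 else if b < k then i1 else r k)" for k
  define e where "e k = f (real k / real n) - of_int (q k)" for k
  have outer: "\<bar>e k\<bar> \<le> modcont f (real t / real n)" if "k \<in> {..n} - {a..b}" for k
  proof (cases "k < a")
    case True
    with that show ?thesis
      using abs_diff_grid_le_modcont[OF f(1), of 0 n k t] a by (simp add: e_def q_def i(1)[symmetric])
  next
    case False
    with that show ?thesis
      using abs_diff_grid_le_modcont[OF f(1), of n n k t] a ab by (auto simp: e_def q_def i(2)[symmetric])
  qed
  have middle: "(\<Sum>k=a..b. e k * Bernstein n k x)
      = (\<Sum>k=a..b. (f (real k / real n) - of_int (r k)) * Bernstein n k x)" for x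
    by (intro sum.cong) (auto simp: e_def q_def)
  show ?thesis
  proof (rule that[of q])
    fix x :: real assume x: "x \<in> {0..1}"
    have "\<bar>\<Sum>k\<le>n. e k * Bernstein n k x\<bar> \<le> modcont f (real t / real n) + 1 / sqrt (2 * (real a + 1))"
    proof (rule abs_sum_Bernstein_split_le[OF _ _ _ _ outer])
      show "\<bar>\<Sum>k=a..b. e k * Bernstein n k x\<bar> \<le> 1 / sqrt (2 * (real a + 1))"
        unfolding middle by (rule r[OF x])
    qed (use ab x modcont_nonneg[OF f(1)] in auto)
    also have "\<dots> \<le> modcont f (real t / real n) + 1 / sqrt (2 * (real t + 1))"
      using a(2) by (intro add_left_mono divide_left_mono real_sqrt_le_mono mult_left_mono) auto
    finally show "\<bar>\<Sum>k\<le>n. (f (real k / real n) - of_int (q k)) * Bernstein n k x\<bar>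
        \<le> modcont f (real t / real n) + 1 / sqrt (2 * (real t + 1))"
      by (simp add: e_def)
  qed
qed

section \<open>Distance to the Bernstein lattice\<close>

lemma bern_eq_Bernstein: "bern = Bernstein"
  by (simp add: fun_eq_iff bern_def Bernstein_def)

lemma continuous_on_bernstein_lattice:
  "P \<in> bernstein_lattice n \<Longrightarrow> continuous_on {0..1} P"
  unfolding bernstein_lattice_def bern_def by (auto intro!: continuous_intros)

lemma dinf_nonneg:
  assumes "continuous_on {0..1} f" "continuous_on {0..1} P"
  shows "0 \<le> dinf f P"
proof -
  have "bdd_above ((\<lambda>x. \<bar>f x - P x\<bar>) ` {0..1})"
    using assms by (intro bounded_imp_bdd_above compact_imp_bounded compact_continuous_image
        continuous_intros) auto
  then have "\<bar>f 0 - P 0\<bar> \<le> dinf f P" unfolding dinf_def by (rule cSUP_upper[rotated]) simp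
  then show ?thesis by linarith
qed

lemma dinf_set_bernstein_lattice_le:
  assumes "continuous_on {0..1} f"
    and "\<And>x. x \<in> {0..1} \<Longrightarrow> \<bar>f x - (\<Sum>k\<le>n. of_int (q k) * bern n k x)\<bar> \<le> B"
  shows "dinf_set f (bernstein_lattice n) \<le> B"
proof -
  define P where "P x = (\<Sum>k\<le>n. of_int (q k) * bern n k x)" for x
  have P: "P \<in> bernstein_lattice n" unfolding P_def bernstein_lattice_def by auto
  have "dinf_set f (bernstein_lattice n) \<le> dinf f P"
    unfolding dinf_set_def
  proof (rule cINF_lower[OF _ P])
    show "bdd_below (dinf f ` bernstein_lattice n)"
      using assms(1) by (auto intro!: bdd_belowI2[of _ 0] dinf_nonneg continuous_on_bernstein_lattice)
  qed
  also have "dinf f P \<le> B"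
    unfolding dinf_def using assms(2) by (intro cSUP_least) (auto simp: P_def)
  finally show ?thesis .
qed

definition rho_term :: "(real \<Rightarrow> real) \<Rightarrow> nat \<Rightarrow> nat \<Rightarrow> real" where
  "rho_term f n t = max (modcont f (real t / real n)) (1 / (2 * (real n + 1 - 2 * real t)))
                      + 1 / sqrt (2 * (real t + 1))"

lemma rho_attained:
  obtains t where "t \<le> n div 2" "rho f n = rho_term f n t"
proof -
  have "rho f n \<in> rho_term f n ` {0 .. n div 2}"
    unfolding rho_def rho_term_def by (rule Min_in) auto
  then show ?thesis using that by auto
qed

lemma rho_le_rho_term: "t \<le> n div 2 \<Longrightarrow> rho f n \<le> rho_term f n t"
  unfolding rho_def rho_term_def by (rule Min_le) auto

lemma dinf_set_bernstein_lattice_le_rho: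
  assumes f: "continuous_on {0..1} f" "f 0 \<in> \<int>" "f 1 \<in> \<int>" and n: "0 < n"
  shows "dinf_set f (bernstein_lattice n) \<le> 5/4 * modcont f (1 / sqrt (real n)) + rho f n"
proof -
  obtain t where t: "t \<le> n div 2" "rho f n = rho_term f n t" by (rule rho_attained)
  obtain q :: "nat \<Rightarrow> int" where q: "\<And>x. x \<in> {0..1} \<Longrightarrow>
      \<bar>\<Sum>k\<le>n. (f (real k / real n) - of_int (q k)) * Bernstein n k x\<bar>
        \<le> modcont f (real t / real n) + 1 / sqrt (2 * (real t + 1))"
    using Bernstein_rounding_error[OF f n t(1)] by blast
  show ?thesis
  proof (rule dinf_set_bernstein_lattice_le[OF f(1)])
    fix x :: real assume x: "x \<in> {0..1}"
    have "f x - (\<Sum>k\<le>n. of_int (q k) * bern n k x)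
       = (f x - (\<Sum>k\<le>n. f (real k / real n) * Bernstein n k x))
         + (\<Sum>k\<le>n. (f (real k / real n) - of_int (q k)) * Bernstein n k x)"
      by (simp add: bern_eq_Bernstein left_diff_distrib sum_subtractf)
    then have "\<bar>f x - (\<Sum>k\<le>n. of_int (q k) * bern n k x)\<bar>
        \<le> 5/4 * modcont f (1 / sqrt (real n))
          + (modcont f (real t / real n) + 1 / sqrt (2 * (real t + 1)))"
      using Bernstein_approximation_error[OF f(1) n x] q[OF x] by linarith
    also have "\<dots> \<le> 5/4 * modcont f (1 / sqrt (real n)) + rho f n"
      unfolding t(2) rho_term_def by simp
    finally show "\<bar>f x - (\<Sum>k\<le>n. of_int (q k) * bern n k x)\<bar>
        \<le> 5/4 * modcont f (1 / sqrt (real n)) + rho f n" .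
  qed
qed

lemma rho_le_cube_root:
  assumes f: "continuous_on {0..1} f" and n: "0 < n"
  shows "rho f n \<le> modcont f (1 / 2 * real n powr (-1/3)) + 2 * real n powr (-1/3)"
proof -
  define s where "s = real n powr (1/3)"
  have s: "1 \<le> s" "s ^ 3 = real n" "real n powr (-1/3) = 1 / s"
    using n by (simp_all add: s_def ge_one_powr_ge_zero powr_power powr_minus_divide)
  \<comment> \<open>this choice makes all three terms of \<open>rho_term f n t\<close> of order \<open>n powr (-1/3)\<close>\<close>
  define t where "t = nat \<lfloor>s^2 / 2\<rfloor>"
  have t: "real t \<le> s^2 / 2" "s^2 / 2 < real t + 1"
    using of_int_floor_le[of "s^2 / 2"] real_of_int_floor_add_one_gt[of "s^2 / 2"]
    unfolding t_def by auto
  have "s^2 \<le> s^3" using s(1) by (simp add: power_increasing)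
  then have "t \<le> n div 2" using t(1) s(2) by linarith
  have \<omega>: "modcont f (real t / real n) \<le> modcont f (1 / 2 * real n powr (-1/3))"
  proof (rule modcont_mono[OF f])
    have "real t / real n \<le> (s^2 / 2) / s^3"
      unfolding s(2) using t(1) by (rule divide_right_mono) simp
    also have "\<dots> = 1 / 2 * real n powr (-1/3)"
      using s(1) unfolding s(3) by (simp add: power2_eq_square power3_eq_cube field_simps)
    finally show "real t / real n \<le> 1 / 2 * real n powr (-1/3)" .
  qed simp
  have gap: "0 \<le> 1 / (2 * (real n + 1 - 2 * real t))" "1 / (2 * (real n + 1 - 2 * real t)) \<le> 1 / s"
  proof -
    have "0 \<le> (s - 1)^2" "0 \<le> s * (s - 1)^2" using s(1) by simp_all
    then have "s \<le> 2 * (s^3 + 1 - s^2)"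
      by (simp add: power2_eq_square power3_eq_cube algebra_simps) (use s(1) in linarith)
    also have "\<dots> \<le> 2 * (real n + 1 - 2 * real t)" using s(2) t(1) by simp
    finally show "0 \<le> 1 / (2 * (real n + 1 - 2 * real t))"
      and "1 / (2 * (real n + 1 - 2 * real t)) \<le> 1 / s"
      using s(1) by (auto intro: divide_left_mono)
  qed
  have sqrt: "1 / sqrt (2 * (real t + 1)) \<le> 1 / s"
  proof -
    have "sqrt (s^2) \<le> sqrt (2 * (real t + 1))" using t(2) by (intro real_sqrt_le_mono) simp
    then show ?thesis using s(1) by (intro divide_left_mono) auto
  qed
  have "rho f n \<le> rho_term f n t" by (rule rho_le_rho_term) fact
  also have "\<dots> \<le> modcont f (real t / real n) + 1 / (2 * (real n + 1 - 2 * real t))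
                   + 1 / sqrt (2 * (real t + 1))"
    unfolding rho_term_def using modcont_nonneg[OF f, of "real t / real n"] gap(1) by simp
  also have "\<dots> \<le> modcont f (1 / 2 * real n powr (-1/3)) + 2 * real n powr (-1/3)"
    using \<omega> gap(2) sqrt unfolding s(3) by linarith
  finally show ?thesis .
qed

theorem mainTheorem1:
  fixes f :: "real \<Rightarrow> real" and n :: nat
  assumes "continuous_on {0..1} f"
    and "f 0 \<in> \<int>" and "f 1 \<in> \<int>"
    and "n > 0"
  shows "dinf_set f (bernstein_lattice n)
           \<le> 5 / 4 * modcont f (1 / sqrt (real n)) + rho f n
       \<and> rho f n \<le> modcont f (1 / 2 * real n powr (-1/3)) + 2 * real n powr (-1/3)
       \<and> dinf_set f (bernstein_lattice n)
           \<le> 9 / 4 * modcont f (real n powr (-1/3)) + 2 * real n powr (-1/3)"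
proof -
  have first: "dinf_set f (bernstein_lattice n) \<le> 5 / 4 * modcont f (1 / sqrt (real n)) + rho f n"
    using dinf_set_bernstein_lattice_le_rho[OF assms] by simp
  have second: "rho f n \<le> modcont f (1 / 2 * real n powr (-1/3)) + 2 * real n powr (-1/3)"
    by (rule rho_le_cube_root[OF assms(1,4)])
  have "1 / sqrt (real n) \<le> real n powr (-1/3)"
    using assms(4) by (simp add: powr_half_sqrt[symmetric] powr_minus_divide divide_left_mono powr_mono)
  then have "modcont f (1 / sqrt (real n)) \<le> modcont f (real n powr (-1/3))"
    by (intro modcont_mono[OF assms(1)]) simp_all
  moreover have "modcont f (1 / 2 * real n powr (-1/3)) \<le> modcont f (real n powr (-1/3))"
    by (intro modcont_mono[OF assms(1)]) simp_all
  ultimately show ?thesis using first second by linarith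
qed

end
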